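(* Fix $x\in\mathbf{X}$. (i) Suppose $H_{TP}(x)\le\delta$, and define the OOD detectors by $\mathbf{P}'_k(x\in\mathbf{X}_k\mid D)=\mathbf{P}(x\in\mathbf{X}_k\mid D)$ for $k=1,\dots,T$. Then $H_{OOD,k}(x)\le\delta$ for all $k=1,\dots,T$. (ii) Suppose OOD detectors satisfy $H_{OOD,k}(x)\le\delta_k$ for $k=1,\dots,T$, and define task-id prediction probabilities by $\mathbf{P}(x\in\mathbf{X}_k\mid D)=\frac{\mathbf{P}'_k(x\in\mathbf{X}_k\mid D)}{\sum_{k'}\mathbf{P}'_{k'}(x\in\mathbf{X}_{k'}\mid D)}$. Then $H_{TP}(x)\le\big(\sum_k\mathbf{1}_{x\in\mathbf{X}_k}e^{\delta_k}\big)\big(\sum_k(1-e^{-\delta_k})\big)$, where $\mathbf{1}_{x\in\mathbf{X}_k}$ is the indicator of $x\in\mathbf{X}_k$.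
   Context: $\mathbf{X}$ is an input domain which is the disjoint union of task domains $\mathbf{X}_1,\dots,\mathbf{X}_T$. $D$ is a fixed conditioning event. A task-id prediction (TP) is a categorical distribution $\{\mathbf{P}(x\in\mathbf{X}_k\mid D)\}_{k=1}^T$ over the $T$ tasks (nonnegative, summing to $1$; in particular $1-\mathbf{P}(x\in\mathbf{X}_k\mid D)=\mathbf{P}(x\in\bigcup_{k'\neq k}\mathbf{X}_{k'}\mid D)$). For $x\in\mathbf{X}_{k_0}$, $H_{TP}(x)=-\log\mathbf{P}(x\in\mathbf{X}_{k_0}\mid D)$. An OOD detector for task $k$ is a Bernoulli distribution given by a value $\mathbf{P}'_k(x\in\mathbf{X}_k\mid D)\in[0,1]$, with $\mathbf{P}'_k(x\in\mathbf{X}\setminus\mathbf{X}_k\mid D)=1-\mathbf{P}'_k(x\in\mathbf{X}_k\mid D)$, and its cross-entropy is $H_{OOD,k}(x)=-\log\mathbf{P}'_k(x\in\mathbf{X}_k\mid D)$ if $x\in\mathbf{X}_k$ and $H_{OOD,k}(x)=-\log\mathbf{P}'_k(x\in\mathbf{X}\setminus\mathbf{X}_k\mid D)$ if $x\in\mathbf{X}\setminus\mathbf{X}_k$. *)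

theory Defs
  imports "HOL-Analysis.Analysis"
begin

definition neglog :: "real \<Rightarrow> ereal" where
  "neglog p = (if p \<le> 0 then \<infinity> else ereal (- ln p))"

text \<open>A task-id prediction for the fixed input x and condition D: the values
  P k = P(x in X_k | D), k = 1..T, form a categorical distribution.\<close>
definition is_TP :: "nat \<Rightarrow> (nat \<Rightarrow> real) \<Rightarrow> bool" where
  "is_TP T P \<longleftrightarrow> (\<forall>k\<in>{1..T}. 0 \<le> P k) \<and> (\<Sum>k=1..T. P k) = 1"

text \<open>OOD detectors: P' k = P'_k(x in X_k | D) in [0,1].\<close>
definition is_OOD :: "nat \<Rightarrow> (nat \<Rightarrow> real) \<Rightarrow> bool" where
  "is_OOD T P' \<longleftrightarrow> (\<forall>k\<in>{1..T}. 0 \<le> P' k \<and> P' k \<le> 1)"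

definition H_TP :: "(nat \<Rightarrow> 'a set) \<Rightarrow> nat \<Rightarrow> (nat \<Rightarrow> real) \<Rightarrow> 'a \<Rightarrow> ereal" where
  "H_TP Xs T P x = neglog (P (THE k. k \<in> {1..T} \<and> x \<in> Xs k))"

definition H_OOD :: "(nat \<Rightarrow> 'a set) \<Rightarrow> (nat \<Rightarrow> real) \<Rightarrow> nat \<Rightarrow> 'a \<Rightarrow> ereal" where
  "H_OOD Xs P' k x = (if x \<in> Xs k then neglog (P' k) else neglog (1 - P' k))"

end

theory Submission
  imports Defs
begin

text \<open>Let k0 be the task containing x, so that H_TP is -ln P(k0) and H_OOD,k is
  -ln (1 - P'(k)) for every k \<noteq> k0.
  (i) In a categorical distribution P(k0) \<le> 1 - P(k) for k \<noteq> k0, so no OOD cross-entropy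
  exceeds H_TP.
  (ii) The hypotheses say P'(k0) \<ge> exp (-\<delta>(k0)) and P'(k) \<le> 1 - exp (-\<delta>(k)) for k \<noteq> k0.
  If R is the total mass of the wrong tasks, ln y \<le> y - 1 gives
  -ln (P'(k0) / (P'(k0) + R)) \<le> R / P'(k0) \<le> exp \<delta>(k0) * R, and R is bounded by
  the sum of the 1 - exp (-\<delta>(k)).\<close>

lemma neglog_le_ereal_iff: "neglog p \<le> ereal d \<longleftrightarrow> exp (- d) \<le> p"
proof (cases "0 < p")
  case True
  then show ?thesis by (auto simp: neglog_def ln_ge_iff[symmetric])
next
  case False
  then show ?thesis by (auto simp: neglog_def intro: order.strict_trans2[OF exp_gt_zero])
qed

lemma neglog_antimono:
  assumes "0 < p" "p \<le> q"
  shows "neglog q \<le> neglog p"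
  using assms by (simp add: neglog_def)

lemma TP_other_le_one_minus:
  assumes "is_TP T P" "k \<in> {1..T}" "k0 \<in> {1..T}" "k \<noteq> k0"
  shows "P k0 \<le> 1 - P k"
proof -
  have "sum P {k, k0} \<le> sum P {1..T}"
    using assms by (intro sum_mono2) (auto simp: is_TP_def)
  with assms show ?thesis by (simp add: is_TP_def)
qed

lemma neglog_one_minus_le_neglog_TP:
  assumes "is_TP T P" "k \<in> {1..T}" "k0 \<in> {1..T}" "k \<noteq> k0"
  shows "neglog (1 - P k) \<le> neglog (P k0)"
proof (cases "0 < P k0")
  case True
  with assms show ?thesis by (intro neglog_antimono TP_other_le_one_minus)
next
  case False
  then show ?thesis by (simp add: neglog_def)
qed

lemma neg_ln_share_le:
  fixes p r :: real
  assumes "0 < p" "0 \<le> r"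
  shows "- ln (p / (p + r)) \<le> r / p"
proof -
  have "- ln (p / (p + r)) = ln ((p + r) / p)"
    using assms by (simp add: ln_div)
  also have "\<dots> \<le> (p + r) / p - 1"
    using assms by (intro ln_le_minus_one) simp
  also have "\<dots> = r / p"
    using assms by (simp add: field_simps)
  finally show ?thesis .
qed

lemma neglog_normalized_OOD_le:
  assumes ood: "is_OOD T P'" and k0: "k0 \<in> {1..T}"
    and in_task: "neglog (P' k0) \<le> ereal (\<delta>s k0)"
    and off_task: "\<forall>k\<in>{1..T} - {k0}. neglog (1 - P' k) \<le> ereal (\<delta>s k)"
  shows "neglog (P' k0 / (\<Sum>k=1..T. P' k))
           \<le> ereal (exp (\<delta>s k0) * (\<Sum>k=1..T. 1 - exp (- \<delta>s k)))"
proof -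
  define R where "R = (\<Sum>k\<in>{1..T} - {k0}. P' k)"
  have range: "0 \<le> P' k" "P' k \<le> 1" if "k \<in> {1..T}" for k
    using ood that by (auto simp: is_OOD_def)
  have p0: "exp (- \<delta>s k0) \<le> P' k0"
    using in_task by (simp add: neglog_le_ereal_iff)
  then have p0_pos: "0 < P' k0"
    by (rule order.strict_trans2[OF exp_gt_zero])
  have "exp (- \<delta>s k0) \<le> 1"
    using p0 range[OF k0] by linarith
  then have \<delta>0_nonneg: "0 \<le> \<delta>s k0"
    by simp
  have R_nonneg: "0 \<le> R"
    unfolding R_def using range by (intro sum_nonneg) auto
  have off_le: "P' k \<le> 1 - exp (- \<delta>s k)" if "k \<in> {1..T} - {k0}" for k
    using bspec[OF off_task that] by (simp add: neglog_le_ereal_iff)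
  have "R \<le> (\<Sum>k\<in>{1..T} - {k0}. 1 - exp (- \<delta>s k))"
    unfolding R_def using off_le by (rule sum_mono)
  also have "\<dots> \<le> (\<Sum>k=1..T. 1 - exp (- \<delta>s k))"
    using k0 \<delta>0_nonneg by (intro sum_mono2) auto
  finally have R_le: "R \<le> (\<Sum>k=1..T. 1 - exp (- \<delta>s k))" .
  have "- ln (P' k0 / (P' k0 + R)) \<le> R / P' k0"
    using p0_pos R_nonneg by (rule neg_ln_share_le)
  also have "\<dots> \<le> R / exp (- \<delta>s k0)"
    using p0 p0_pos R_nonneg by (intro divide_left_mono) auto
  also have "\<dots> \<le> exp (\<delta>s k0) * (\<Sum>k=1..T. 1 - exp (- \<delta>s k))"
    using R_le by (simp add: exp_minus field_simps)
  finally have "- ln (P' k0 / (P' k0 + R)) \<le> exp (\<delta>s k0) * (\<Sum>k=1..T. 1 - exp (- \<delta>s k))" .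
  moreover have "(\<Sum>k=1..T. P' k) = P' k0 + R"
    unfolding R_def using k0 by (simp add: sum.remove)
  moreover have "0 < P' k0 / (P' k0 + R)"
    using p0_pos R_nonneg by simp
  ultimately show ?thesis
    by (simp add: neglog_def)
qed

lemma sum_indicator_disjoint_family:
  assumes "disjoint_family_on Xs I" "finite I" "k0 \<in> I" "x \<in> Xs k0"
  shows "(\<Sum>k\<in>I. indicator (Xs k) x * f k) = (f k0 :: real)"
proof -
  have "(\<Sum>k\<in>I. indicator (Xs k) x * f k) = (\<Sum>k\<in>I. if k = k0 then f k0 else 0)"
    using assms by (intro sum.cong) (auto simp: disjoint_family_on_def indicator_def)
  with assms show ?thesis by simp
qed

theorem theorem2:
  fixes Xs :: "nat \<Rightarrow> 'a set" and T :: nat and x :: 'a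
  assumes disj: "disjoint_family_on Xs {1..T}"
    and x_in: "x \<in> (\<Union>k\<in>{1..T}. Xs k)"
  shows "(\<forall>(P :: nat \<Rightarrow> real) (\<delta> :: real).
            is_TP T P \<longrightarrow> H_TP Xs T P x \<le> ereal \<delta> \<longrightarrow>
            (\<forall>k\<in>{1..T}. H_OOD Xs P k x \<le> ereal \<delta>))
       \<and> (\<forall>(P' :: nat \<Rightarrow> real) (\<delta>s :: nat \<Rightarrow> real).
            is_OOD T P' \<longrightarrow> (\<forall>k\<in>{1..T}. H_OOD Xs P' k x \<le> ereal (\<delta>s k)) \<longrightarrow>
            H_TP Xs T (\<lambda>k. P' k / (\<Sum>k'=1..T. P' k')) x
              \<le> ereal ((\<Sum>k=1..T. indicator (Xs k) x * exp (\<delta>s k))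
                       * (\<Sum>k=1..T. (1 - exp (- \<delta>s k)))))"
proof -
  obtain k0 where k0: "k0 \<in> {1..T}" "x \<in> Xs k0"
    using x_in by blast
  have other: "x \<notin> Xs k" if "k \<in> {1..T}" "k \<noteq> k0" for k
    using disj that k0 unfolding disjoint_family_on_def by blast
  have H_TP_eq: "H_TP Xs T P x = neglog (P k0)" for P
  proof -
    have "(THE k. k \<in> {1..T} \<and> x \<in> Xs k) = k0"
      using k0 other by (intro the_equality) auto
    then show ?thesis by (simp add: H_TP_def)
  qed
  have H_OOD_eq: "H_OOD Xs P k x = (if k = k0 then neglog (P k0) else neglog (1 - P k))"
    if "k \<in> {1..T}" for P k
    using k0 other[OF that] by (auto simp: H_OOD_def)
  have "H_OOD Xs P k x \<le> H_TP Xs T P x" if "is_TP T P" "k \<in> {1..T}" for P k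
    using that k0 by (simp add: H_OOD_eq H_TP_eq neglog_one_minus_le_neglog_TP)
  moreover have "H_TP Xs T (\<lambda>k. P' k / (\<Sum>k'=1..T. P' k')) x
                   \<le> ereal (exp (\<delta>s k0) * (\<Sum>k=1..T. 1 - exp (- \<delta>s k)))"
    if "is_OOD T P'" "\<forall>k\<in>{1..T}. H_OOD Xs P' k x \<le> ereal (\<delta>s k)" for P' \<delta>s
    using that k0 unfolding H_TP_eq
    by (intro neglog_normalized_OOD_le) (auto simp: H_OOD_eq split: if_splits)
  ultimately show ?thesis
    using sum_indicator_disjoint_family[OF disj _ k0(1,2)] by (fastforce intro: order_trans)
qed

end
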